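(* Let $D$ be a regular $(v,k,\lambda,\mu)$-PDS in a finite group $G$ with $0<\mu<k$ and $\sqrt\Delta\in\mathbb{Z}$. If $\xi$ and $\chi$ are nonprincipal linear characters of $G$ whose orders are both coprime to $\sqrt\Delta$, then $\xi(D)=\chi(D)$.
   Context: A $(v,k,\lambda,\mu)$-PDS in a group $G$ of order $v$ is a $k$-subset $D$ such that every nonidentity element of $D$ is $xy^{-1}$ ($x,y\in D$) in exactly $\lambda$ ways and every nonidentity element of $G\setminus D$ in exactly $\mu$ ways; regular means $D=D^{(-1)}$ and $1\notin D$. $\Delta=(\lambda-\mu)^2+4(k-\mu)$; $\chi(D)=\sum_{d\in D}\chi(d)$. *)

theory Defs
  imports "HOL-Algebra.Group" "HOL-Computational_Algebra.Primes" Complex_Main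
begin

definition diff_count :: "('a, 'b) monoid_scheme \<Rightarrow> 'a set \<Rightarrow> 'a \<Rightarrow> nat" where
  "diff_count G D g = card {(x, y). x \<in> D \<and> y \<in> D \<and> x \<otimes>\<^bsub>G\<^esub> inv\<^bsub>G\<^esub> y = g}"

definition is_PDS :: "('a, 'b) monoid_scheme \<Rightarrow> 'a set \<Rightarrow> nat \<Rightarrow> nat \<Rightarrow> nat \<Rightarrow> nat \<Rightarrow> bool" where
  "is_PDS G D v k lam mu \<longleftrightarrow>
     D \<subseteq> carrier G \<and> card (carrier G) = v \<and> card D = k \<and>
     (\<forall>g \<in> D - {\<one>\<^bsub>G\<^esub>}. diff_count G D g = lam) \<and>
     (\<forall>g \<in> carrier G - D - {\<one>\<^bsub>G\<^esub>}. diff_count G D g = mu)"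

definition regular_PDS :: "('a, 'b) monoid_scheme \<Rightarrow> 'a set \<Rightarrow> bool" where
  "regular_PDS G D \<longleftrightarrow> D = (\<lambda>x. inv\<^bsub>G\<^esub> x) ` D \<and> \<one>\<^bsub>G\<^esub> \<notin> D"

definition PDS_Delta :: "nat \<Rightarrow> nat \<Rightarrow> nat \<Rightarrow> int" where
  "PDS_Delta k lam mu = (int lam - int mu)^2 + 4 * (int k - int mu)"

definition linear_char :: "('a, 'b) monoid_scheme \<Rightarrow> ('a \<Rightarrow> complex) \<Rightarrow> bool" where
  "linear_char G \<chi> \<longleftrightarrow> (\<forall>x \<in> carrier G. \<chi> x \<noteq> 0) \<and>
     (\<forall>x \<in> carrier G. \<forall>y \<in> carrier G. \<chi> (x \<otimes>\<^bsub>G\<^esub> y) = \<chi> x * \<chi> y)"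

definition principal_char :: "('a, 'b) monoid_scheme \<Rightarrow> ('a \<Rightarrow> complex) \<Rightarrow> bool" where
  "principal_char G \<chi> \<longleftrightarrow> (\<forall>x \<in> carrier G. \<chi> x = 1)"

definition char_order :: "('a, 'b) monoid_scheme \<Rightarrow> ('a \<Rightarrow> complex) \<Rightarrow> nat" where
  "char_order G \<chi> = (LEAST n. 0 < n \<and> (\<forall>x \<in> carrier G. \<chi> x ^ n = 1))"

definition char_sum :: "('a \<Rightarrow> complex) \<Rightarrow> 'a set \<Rightarrow> complex" where
  "char_sum \<chi> D = (\<Sum>d \<in> D. \<chi> d)"

end

theory Submission
  imports Defs "Jordan_Normal_Form.Char_Poly"
begin

text \<open>Let \<open>\<psi>\<close> be a nonprincipal linear character of order \<open>n\<close> prime to \<open>s = \<surd>\<Delta>\<close>. Every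
  power \<open>\<psi>\<^sup>t\<close> with \<open>0 < t < n\<close> takes on \<open>D\<close> one of the two roots \<open>r\<close>, \<open>r + s\<close> of
  \<open>x\<^sup>2 = (\<lambda> - \<mu>) x + (k - \<mu>)\<close>; let \<open>U\<close> be the set of those \<open>t\<close> giving \<open>r + s\<close>.
  Fourier inversion over the powers of \<open>\<psi>\<close> shows that \<open>s \<cdot> \<Sum>\<^sub>t\<^sub>\<in>\<^sub>U \<psi>(g)\<^sup>t \<in> r - k + n\<int>\<close>
  for every \<open>g\<close>. Being an algebraic integer, the power sum is then a rational integer
  congruent to \<open>|U|\<close> modulo \<open>n\<close> and of absolute value at most \<open>|U| < n\<close>, so it equals
  \<open>|U|\<close> or \<open>|U| - n\<close>. Its first two moments over \<open>G\<close> then force \<open>U = {}\<close> or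
  \<open>U = {1..<n}\<close>, and in both cases \<open>n\<close> divides \<open>k - \<psi>(D)\<close>; this divisibility
  singles out \<open>\<psi>(D)\<close> among the two roots. If \<open>\<xi>(D) \<noteq> \<chi>(D)\<close>, the orders of
  \<open>\<xi>\<close> and \<open>\<chi>\<close> are therefore coprime, so \<open>\<xi>\<chi>\<close> has order \<open>ord \<xi> \<cdot> ord \<chi>\<close>;
  both orders then divide \<open>k - (\<xi>\<chi>)(D)\<close>, which forces \<open>\<xi>(D) = (\<xi>\<chi>)(D) = \<chi>(D)\<close>.\<close>

lemma power_mod_if_power_eq_1:
  fixes x :: "'a :: monoid_mult"
  assumes "x ^ n = 1"
  shows "x ^ (m mod n) = x ^ m"
proof -
  have "x ^ m = x ^ (n * (m div n) + m mod n)" by simp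
  also have "\<dots> = (x ^ n) ^ (m div n) * x ^ (m mod n)" by (simp only: power_add power_mult)
  finally show ?thesis using assms by simp
qed

lemma sum_powers_root_of_unity:
  fixes w :: "'a :: field"
  assumes "w ^ n = 1" and "0 < n"
  shows "(\<Sum>t<n. w ^ t) = (if w = 1 then of_nat n else 0)"
  using assms by (simp add: sum_gp_strict)

text \<open>The sum is an eigenvalue, with eigenvector \<open>(u ^ i)\<close> for \<open>i < n\<close>, of the integer
  matrix whose entry \<open>(i, j)\<close> counts the \<open>t \<in> S\<close> with \<open>(i + t) mod n = j\<close>.\<close>
lemma algebraic_int_sum_powers_root_of_unity:
  fixes u :: complex
  assumes n: "0 < n" and u: "u ^ n = 1" and S: "finite S"
  shows "algebraic_int (\<Sum>t\<in>S. u ^ t)"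
proof -
  define x where "x = (\<Sum>t\<in>S. u ^ t)"
  define A :: "int mat" where "A = mat n n (\<lambda>(i, j). int (card {t\<in>S. (i + t) mod n = j}))"
  define B :: "complex mat" where "B = map_mat of_int A"
  define w :: "complex vec" where "w = vec n (\<lambda>i. u ^ i)"
  have A: "A \<in> carrier_mat n n" unfolding A_def by auto
  have B: "B \<in> carrier_mat n n" unfolding B_def using A by auto
  have "B *\<^sub>v w = x \<cdot>\<^sub>v w"
  proof (rule eq_vecI)
    fix i assume "i < dim_vec (x \<cdot>\<^sub>v w)"
    hence i: "i < n" unfolding w_def by simp
    have "(B *\<^sub>v w) $ i = (\<Sum>j<n. of_int (A $$ (i, j)) * u ^ j)"
      using i B unfolding B_def w_def
      by (simp add: mult_mat_vec_def scalar_prod_def A_def atLeast0LessThan)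
    also have "\<dots> = (\<Sum>j<n. \<Sum>t\<in>{t\<in>S. (i + t) mod n = j}. u ^ ((i + t) mod n))"
      using i by (intro sum.cong refl) (simp add: A_def)
    also have "\<dots> = (\<Sum>t\<in>S. u ^ ((i + t) mod n))"
      by (rule sum.group) (use S n in auto)
    also have "\<dots> = (\<Sum>t\<in>S. u ^ i * u ^ t)"
      by (simp add: power_mod_if_power_eq_1[OF u] power_add)
    also have "\<dots> = x * w $ i"
      using i unfolding x_def w_def by (simp add: sum_distrib_left mult.commute)
    finally show "(B *\<^sub>v w) $ i = (x \<cdot>\<^sub>v w) $ i" using i unfolding w_def by simp
  qed (use B in \<open>simp add: w_def\<close>)
  moreover have "w \<noteq> 0\<^sub>v n"
  proof
    assume "w = 0\<^sub>v n"
    hence "w $ 0 = 0" using n by simp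
    thus False using n unfolding w_def by simp
  qed
  ultimately have "eigenvector B w x" unfolding eigenvector_def w_def using B by auto
  hence "eigenvalue B x" unfolding eigenvalue_def by auto
  hence "poly (char_poly B) x = 0" using eigenvalue_root_char_poly[OF B] by simp
  moreover have "char_poly B = map_poly of_int (char_poly A)"
    unfolding B_def by (rule of_int_hom.char_poly_hom[OF A])
  moreover have "lead_coeff (char_poly A) = 1" using degree_monic_char_poly[OF A] by simp
  ultimately show ?thesis unfolding x_def[symmetric] algebraic_int_altdef_ipoly by auto
qed

lemma quadratic_roots_square_discriminant:
  fixes z :: "'a :: field_char_0" and L M r :: int
  assumes root: "z ^ 2 = of_int L * z + of_int M" and disc: "r ^ 2 = L ^ 2 + 4 * M"
  shows "z = of_int ((L - r) div 2) \<or> z = of_int ((L - r) div 2 + r)"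
proof -
  have "even (L ^ 2) \<longleftrightarrow> even (r ^ 2)" using disc by simp
  hence "even (L - r)" by simp
  define b where "b = (L - r) div 2"
  have b: "L = 2 * b + r" using \<open>even (L - r)\<close> unfolding b_def by simp
  have "(2 * z - of_int L) ^ 2 = of_int r ^ 2"
  proof -
    have "(2 * z - of_int L) ^ 2 = 4 * (z ^ 2 - of_int L * z) + of_int (L ^ 2)"
      by (simp add: power2_eq_square algebra_simps)
    also have "\<dots> = of_int (r ^ 2)" using root disc by simp
    finally show ?thesis by simp
  qed
  hence "2 * z - of_int L = of_int r \<or> 2 * z - of_int L = - of_int r"
    using power2_eq_iff by blast
  hence "2 * z = 2 * (of_int b + of_int r) \<or> 2 * z = 2 * of_int b"
    using b by (auto simp: algebra_simps)
  hence "z = of_int b + of_int r \<or> z = of_int b" by (simp only: mult_cancel_left) simp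
  thus ?thesis unfolding b_def by auto
qed

lemma multiple_between_neg_double_and_0:
  fixes f n :: int
  assumes "n dvd f" and "- 2 * n < f" and "f \<le> 0"
  shows "f = 0 \<or> f = - n"
proof -
  obtain q where q: "f = n * q" using assms(1) by auto
  have n: "0 < n" using assms(2,3) by linarith
  have "n * - 2 < n * q" and "n * q \<le> n * 0" using assms(2,3) q by simp_all
  hence "- 2 < q" and "q \<le> 0" using n by (simp_all only: mult_less_cancel_left_pos mult_le_cancel_left_pos)
  hence "q = 0 \<or> q = - 1" by linarith
  thus ?thesis using q by auto
qed

lemma sum_two_valued_deviations:
  fixes \<tau> :: "'a \<Rightarrow> int" and \<sigma> n :: int
  assumes A: "finite A" "A \<noteq> {}"
    and sum_0: "(\<Sum>x\<in>A. \<tau> x) = 0" and sum_sq: "(\<Sum>x\<in>A. \<tau> x ^ 2) = int (card A) * \<sigma>"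
    and two_valued: "\<And>x. x \<in> A \<Longrightarrow> \<tau> x - \<sigma> = 0 \<or> \<tau> x - \<sigma> = - n"
  shows "\<sigma> = 0 \<or> \<sigma> = n - 1"
proof -
  have "(\<Sum>x\<in>A. (\<tau> x - \<sigma>) ^ 2) =
      (\<Sum>x\<in>A. \<tau> x ^ 2) - 2 * \<sigma> * (\<Sum>x\<in>A. \<tau> x) + int (card A) * \<sigma> ^ 2"
    by (simp add: power2_diff sum.distrib sum_subtractf sum_distrib_left sum_distrib_right algebra_simps)
  hence "int (card A) * \<sigma> + int (card A) * \<sigma> ^ 2 = (\<Sum>x\<in>A. (\<tau> x - \<sigma>) ^ 2)"
    using sum_0 sum_sq by simp
  also have "\<dots> = (\<Sum>x\<in>A. - n * (\<tau> x - \<sigma>))"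
  proof (intro sum.cong refl)
    fix x assume "x \<in> A"
    with two_valued[of x] show "(\<tau> x - \<sigma>) ^ 2 = - n * (\<tau> x - \<sigma>)"
      by (auto simp: power2_eq_square)
  qed
  also have "\<dots> = - n * ((\<Sum>x\<in>A. \<tau> x) - int (card A) * \<sigma>)"
    by (simp only: sum_distrib_left[symmetric] sum_subtractf sum_constant)
  also have "\<dots> = int (card A) * n * \<sigma>"
    using sum_0 by simp
  finally have "int (card A) * \<sigma> * (1 + \<sigma> - n) = 0" by (simp add: algebra_simps power2_eq_square)
  thus ?thesis using A by auto
qed

section \<open>Linear characters\<close>

context group
begin

lemma linear_char_nonzero: "linear_char G \<psi> \<Longrightarrow> x \<in> carrier G \<Longrightarrow> \<psi> x \<noteq> 0"
  unfolding linear_char_def by blast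

lemma linear_char_mult: "linear_char G \<psi> \<Longrightarrow> x \<in> carrier G \<Longrightarrow> y \<in> carrier G \<Longrightarrow>
    \<psi> (x \<otimes> y) = \<psi> x * \<psi> y"
  unfolding linear_char_def by blast

lemma linear_char_one:
  assumes "linear_char G \<psi>"
  shows "\<psi> \<one> = 1"
proof -
  have "\<psi> \<one> * \<psi> \<one> = \<psi> \<one> * 1"
    using linear_char_mult[OF assms, of \<one> \<one>] by simp
  thus ?thesis using linear_char_nonzero[OF assms] by simp
qed

lemma linear_char_inv:
  assumes "linear_char G \<psi>" and "x \<in> carrier G"
  shows "\<psi> (inv x) * \<psi> x = 1"
  using linear_char_mult[OF assms(1) inv_closed[OF assms(2)] assms(2)]
    linear_char_one[OF assms(1)] assms(2) by simp

lemma linear_char_power: "linear_char G \<psi> \<Longrightarrow> linear_char G (\<lambda>x. \<psi> x ^ m)"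
  unfolding linear_char_def by (auto simp: power_mult_distrib)

lemma linear_char_times:
  "linear_char G \<xi> \<Longrightarrow> linear_char G \<chi> \<Longrightarrow> linear_char G (\<lambda>x. \<xi> x * \<chi> x)"
  unfolding linear_char_def by (auto simp: algebra_simps)

lemma bij_betw_l_mult: "h \<in> carrier G \<Longrightarrow> bij_betw (\<lambda>g. h \<otimes> g) (carrier G) (carrier G)"
  by (rule bij_betwI[where g = "\<lambda>g. inv h \<otimes> g"]) (auto simp: m_assoc[symmetric])

lemma sum_nonprincipal_linear_char:
  assumes "finite (carrier G)" and lc: "linear_char G \<psi>" and "\<not> principal_char G \<psi>"
  shows "(\<Sum>g\<in>carrier G. \<psi> g) = 0"
proof -
  obtain h where h: "h \<in> carrier G" "\<psi> h \<noteq> 1"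
    using assms(3) unfolding principal_char_def by auto
  have "(\<Sum>g\<in>carrier G. \<psi> g) = (\<Sum>g\<in>carrier G. \<psi> (h \<otimes> g))"
    using sum.reindex_bij_betw[OF bij_betw_l_mult[OF h(1)], of \<psi>] by simp
  also have "\<dots> = \<psi> h * (\<Sum>g\<in>carrier G. \<psi> g)"
    using h by (simp add: linear_char_mult[OF lc] sum_distrib_left)
  finally have "(\<psi> h - 1) * (\<Sum>g\<in>carrier G. \<psi> g) = 0" by (simp add: algebra_simps)
  thus ?thesis using h by simp
qed

lemma linear_char_power_card:
  assumes fin: "finite (carrier G)" and lc: "linear_char G \<psi>" and x: "x \<in> carrier G"
  shows "\<psi> x ^ card (carrier G) = 1"
proof -
  have "(\<Prod>g\<in>carrier G. \<psi> g) = (\<Prod>g\<in>carrier G. \<psi> (x \<otimes> g))"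
    using prod.reindex_bij_betw[OF bij_betw_l_mult[OF x], of \<psi>] by simp
  also have "\<dots> = \<psi> x ^ card (carrier G) * (\<Prod>g\<in>carrier G. \<psi> g)"
    using x by (simp add: linear_char_mult[OF lc] prod.distrib)
  finally have "(\<psi> x ^ card (carrier G) - 1) * (\<Prod>g\<in>carrier G. \<psi> g) = 0"
    by (simp add: algebra_simps)
  moreover have "(\<Prod>g\<in>carrier G. \<psi> g) \<noteq> 0"
    using fin linear_char_nonzero[OF lc] by (simp add: prod_zero_iff)
  ultimately show ?thesis by simp
qed

lemma
  assumes "finite (carrier G)" and "linear_char G \<psi>"
  shows char_order_pos: "0 < char_order G \<psi>"
    and power_char_order: "x \<in> carrier G \<Longrightarrow> \<psi> x ^ char_order G \<psi> = 1"
proof -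
  have "0 < card (carrier G)" using assms(1) card_gt_0_iff by blast
  hence "\<exists>n. 0 < n \<and> (\<forall>x\<in>carrier G. \<psi> x ^ n = 1)"
    using linear_char_power_card[OF assms] by blast
  from LeastI_ex[OF this, folded char_order_def]
  show "0 < char_order G \<psi>" and "x \<in> carrier G \<Longrightarrow> \<psi> x ^ char_order G \<psi> = 1" by blast+
qed

lemma char_order_dvd_iff:
  assumes fin: "finite (carrier G)" and lc: "linear_char G \<psi>"
  shows "(\<forall>x\<in>carrier G. \<psi> x ^ m = 1) \<longleftrightarrow> char_order G \<psi> dvd m"
proof
  let ?n = "char_order G \<psi>"
  assume m: "\<forall>x\<in>carrier G. \<psi> x ^ m = 1"
  have "\<forall>x\<in>carrier G. \<psi> x ^ (m mod ?n) = 1"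
    using m power_mod_if_power_eq_1[OF power_char_order[OF fin lc]] by simp
  hence "\<not> 0 < m mod ?n"
    using Least_le[of "\<lambda>n. 0 < n \<and> (\<forall>x\<in>carrier G. \<psi> x ^ n = 1)" "m mod ?n"]
      mod_less_divisor[OF char_order_pos[OF fin lc], of m]
    unfolding char_order_def by auto
  thus "?n dvd m" by (simp add: dvd_eq_mod_eq_0)
next
  assume "char_order G \<psi> dvd m"
  thus "\<forall>x\<in>carrier G. \<psi> x ^ m = 1"
    by (auto simp: power_mult power_char_order[OF fin lc])
qed

lemma principal_char_power_iff:
  assumes "finite (carrier G)" and "linear_char G \<psi>"
  shows "principal_char G (\<lambda>x. \<psi> x ^ m) \<longleftrightarrow> char_order G \<psi> dvd m"
  unfolding principal_char_def char_order_dvd_iff[OF assms, symmetric] ..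

lemma principal_char_iff_char_order_eq_1:
  assumes "finite (carrier G)" and "linear_char G \<psi>"
  shows "principal_char G \<psi> \<longleftrightarrow> char_order G \<psi> = 1"
  using principal_char_power_iff[OF assms, of 1] by simp

lemma sum_linear_char_power:
  assumes "finite (carrier G)" and "linear_char G \<psi>"
  shows "(\<Sum>g\<in>carrier G. \<psi> g ^ m) =
    (if char_order G \<psi> dvd m then of_nat (card (carrier G)) else 0)"
  using principal_char_power_iff[OF assms, of m]
    sum_nonprincipal_linear_char[OF assms(1) linear_char_power[OF assms(2)]]
  by (auto simp: principal_char_def)

lemma char_order_times_coprime:
  assumes fin: "finite (carrier G)" and lx: "linear_char G \<xi>" and lc: "linear_char G \<chi>"
    and coprime: "coprime (char_order G \<xi>) (char_order G \<chi>)"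
  shows "char_order G (\<lambda>x. \<xi> x * \<chi> x) = char_order G \<xi> * char_order G \<chi>"
proof -
  define n1 n2 n3 where "n1 = char_order G \<xi>" and "n2 = char_order G \<chi>"
    and "n3 = char_order G (\<lambda>x. \<xi> x * \<chi> x)"
  note dvd_iff = char_order_dvd_iff[OF fin]
  have lxc: "linear_char G (\<lambda>x. \<xi> x * \<chi> x)" using lx lc by (rule linear_char_times)
  have \<xi>: "\<xi> x ^ (n1 * q) = 1" and \<chi>: "\<chi> x ^ (n2 * q) = 1"
    and \<xi>\<chi>: "(\<xi> x * \<chi> x) ^ (n3 * q) = 1" if "x \<in> carrier G" for x q
    using that power_char_order[OF fin lx] power_char_order[OF fin lc]
      power_char_order[OF fin lxc, of x]
    unfolding n1_def n2_def n3_def by (simp_all add: power_mult)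
  have "n3 dvd n1 * n2"
    using \<xi> \<chi>[of _ n1] unfolding n3_def dvd_iff[OF lxc, symmetric]
    by (simp add: power_mult_distrib mult.commute[of n1])
  moreover have "n1 dvd n3 * n2"
    using \<xi>\<chi>[of _ n2] \<chi>[of _ n3] unfolding n1_def dvd_iff[OF lx, symmetric]
    by (simp add: power_mult_distrib mult.commute[of n2])
  hence "n1 dvd n3" using coprime unfolding n1_def n2_def by (simp add: coprime_dvd_mult_left_iff)
  moreover have "n2 dvd n3 * n1"
    using \<xi>\<chi>[of _ n1] \<xi>[of _ n3] unfolding n2_def dvd_iff[OF lc, symmetric]
    by (simp add: power_mult_distrib mult.commute[of n1])
  hence "n2 dvd n3" using coprime unfolding n1_def n2_def
    by (simp add: coprime_dvd_mult_left_iff coprime_commute)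
  ultimately show ?thesis
    using coprime unfolding n1_def [symmetric] n2_def [symmetric] n3_def [symmetric]
    by (simp add: dvd_antisym divides_mult)
qed

lemma char_sum_times_inv_eq_sum_diff_count:
  assumes fin: "finite (carrier G)" and lc: "linear_char G \<psi>" and D: "D \<subseteq> carrier G"
  shows "(\<Sum>x\<in>D. \<psi> x) * (\<Sum>y\<in>D. \<psi> (inv y)) = (\<Sum>g\<in>carrier G. of_nat (diff_count G D g) * \<psi> g)"
proof -
  define f where "f = (\<lambda>(x, y). x \<otimes> inv y)"
  have finD: "finite D" using D fin finite_subset by blast
  have DG: "\<And>x. x \<in> D \<Longrightarrow> x \<in> carrier G" using D by blast
  have "(\<Sum>x\<in>D. \<psi> x) * (\<Sum>y\<in>D. \<psi> (inv y)) = (\<Sum>p\<in>D \<times> D. \<psi> (f p))"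
    unfolding sum_product sum.cartesian_product f_def
    by (intro sum.cong refl) (auto simp: linear_char_mult[OF lc] DG)
  also have "\<dots> = (\<Sum>g\<in>carrier G. \<Sum>p\<in>{p\<in>D \<times> D. f p = g}. \<psi> (f p))"
    by (rule sum.group[symmetric]) (use finD fin DG in \<open>auto simp: f_def\<close>)
  also have "\<dots> = (\<Sum>g\<in>carrier G. of_nat (diff_count G D g) * \<psi> g)"
  proof (intro sum.cong refl)
    fix g
    have "{p\<in>D \<times> D. f p = g} = {(x, y). x \<in> D \<and> y \<in> D \<and> x \<otimes> inv y = g}"
      unfolding f_def by auto
    moreover have "(\<Sum>p\<in>{p\<in>D \<times> D. f p = g}. \<psi> (f p)) = (\<Sum>p\<in>{p\<in>D \<times> D. f p = g}. \<psi> g)"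
      by (rule sum.cong) auto
    ultimately show "(\<Sum>p\<in>{p\<in>D \<times> D. f p = g}. \<psi> (f p)) = of_nat (diff_count G D g) * \<psi> g"
      unfolding diff_count_def by simp
  qed
  finally show ?thesis .
qed

lemma sum_char_sum_powers:
  assumes fin: "finite (carrier G)" and lc: "linear_char G \<psi>" and D: "D \<subseteq> carrier G"
    and u: "u ^ char_order G \<psi> = 1"
  shows "(\<Sum>t<char_order G \<psi>. char_sum (\<lambda>x. \<psi> x ^ t) D * u ^ t) =
    of_nat (char_order G \<psi> * card {d\<in>D. \<psi> d * u = 1})"
proof -
  let ?n = "char_order G \<psi>"
  have finD: "finite D" using D fin finite_subset by blast
  have "(\<Sum>t<?n. char_sum (\<lambda>x. \<psi> x ^ t) D * u ^ t) = (\<Sum>d\<in>D. \<Sum>t<?n. (\<psi> d * u) ^ t)"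
    unfolding char_sum_def by (simp add: sum_distrib_right power_mult_distrib sum.swap[of _ D])
  also have "\<dots> = (\<Sum>d\<in>D. if \<psi> d * u = 1 then of_nat ?n else 0)"
  proof (intro sum.cong refl sum_powers_root_of_unity char_order_pos[OF fin lc])
    fix d assume "d \<in> D"
    thus "(\<psi> d * u) ^ ?n = 1"
      using D u power_char_order[OF fin lc] by (auto simp: power_mult_distrib)
  qed
  also have "\<dots> = of_nat (?n * card {d\<in>D. \<psi> d * u = 1})"
    using finD by (simp add: sum.If_cases Int_def mult.commute)
  finally show ?thesis .
qed

lemma sum_char_power_subset_sum:
  assumes "finite (carrier G)" and "linear_char G \<psi>" and S: "S \<subseteq> {1..<char_order G \<psi>}"
  shows "(\<Sum>g\<in>carrier G. \<Sum>t\<in>S. \<psi> g ^ t) = 0"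
proof -
  have "\<not> char_order G \<psi> dvd t" if "t \<in> S" for t
  proof -
    have "0 < t" "t < char_order G \<psi>" using that S by auto
    thus ?thesis by (auto dest: nat_dvd_not_less)
  qed
  hence "(\<Sum>t\<in>S. \<Sum>g\<in>carrier G. \<psi> g ^ t) = 0"
    by (simp add: sum_linear_char_power[OF assms(1,2)])
  thus ?thesis by (subst sum.swap)
qed

lemma sum_square_char_power_subset_sum:
  assumes fin: "finite (carrier G)" and lc: "linear_char G \<psi>"
    and S: "S \<subseteq> {1..<char_order G \<psi>}" and sym: "\<And>t. t \<in> S \<Longrightarrow> char_order G \<psi> - t \<in> S"
  shows "(\<Sum>g\<in>carrier G. (\<Sum>t\<in>S. \<psi> g ^ t) ^ 2) = of_nat (card (carrier G) * card S)"
proof -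
  let ?n = "char_order G \<psi>" and ?v = "of_nat (card (carrier G)) :: complex"
  have finS: "finite S" using S finite_subset by blast
  have dvd_iff: "?n dvd t + t' \<longleftrightarrow> t' = ?n - t" if "t \<in> S" "t' \<in> S" for t t'
  proof -
    have bounds: "0 < t" "t < ?n" "0 < t'" "t' < ?n" using that S by auto
    show ?thesis
    proof
      assume "?n dvd t + t'"
      then obtain q where q: "t + t' = ?n * q" ..
      have "0 < q" using q bounds by (cases q) auto
      moreover have "?n * q < ?n * 2" using q bounds by linarith
      ultimately have "q = 1" by simp
      thus "t' = ?n - t" using q by simp
    qed (use bounds in simp)
  qed
  have "(\<Sum>g\<in>carrier G. (\<Sum>t\<in>S. \<psi> g ^ t) ^ 2) =
      (\<Sum>g\<in>carrier G. \<Sum>t\<in>S. \<Sum>t'\<in>S. \<psi> g ^ (t + t'))"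
    by (simp add: power2_eq_square sum_product power_add)
  also have "\<dots> = (\<Sum>t\<in>S. \<Sum>g\<in>carrier G. \<Sum>t'\<in>S. \<psi> g ^ (t + t'))"
    by (rule sum.swap)
  also have "\<dots> = (\<Sum>t\<in>S. \<Sum>t'\<in>S. \<Sum>g\<in>carrier G. \<psi> g ^ (t + t'))"
    by (intro sum.cong refl sum.swap)
  also have "\<dots> = (\<Sum>t\<in>S. \<Sum>t'\<in>S. if t' = ?n - t then ?v else 0)"
    by (intro sum.cong refl) (simp add: sum_linear_char_power[OF fin lc] dvd_iff)
  also have "\<dots> = (\<Sum>t\<in>S. ?v)"
    using finS sym by (intro sum.cong refl) (simp add: sum.delta')
  finally show ?thesis by (simp add: mult.commute)
qed

end

section \<open>Regular partial difference sets\<close>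

locale regular_PDS_group = group G for G :: "('a, 'b) monoid_scheme" (structure) +
  fixes D :: "'a set" and v k lam mu :: nat
  assumes finite_carrier: "finite (carrier G)"
    and PDS: "is_PDS G D v k lam mu"
    and regular: "regular_PDS G D"
begin

lemma subset_carrier: "D \<subseteq> carrier G"
  and card_D: "card D = k"
  and diff_count_in_D: "g \<in> D - {\<one>} \<Longrightarrow> diff_count G D g = lam"
  and diff_count_notin_D: "g \<in> carrier G - D - {\<one>} \<Longrightarrow> diff_count G D g = mu"
  using PDS unfolding is_PDS_def by auto

lemma one_notin_D: "\<one> \<notin> D"
  using regular unfolding regular_PDS_def by blast

lemma finite_D: "finite D"
  using subset_carrier finite_carrier finite_subset by blast

lemma sum_inv_D: "(\<Sum>y\<in>D. f (inv y)) = (\<Sum>y\<in>D. f y)"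
proof -
  have "inj_on (\<lambda>x. inv x) D"
    using subset_carrier by (intro inj_onI) (metis inv_inv subsetD)
  moreover have "(\<lambda>x. inv x) ` D = D"
    using regular unfolding regular_PDS_def by metis
  ultimately show ?thesis
    using sum.reindex[of "\<lambda>x. inv x" D f] by simp
qed

lemma diff_count_one: "diff_count G D \<one> = k"
proof -
  have "{(x, y). x \<in> D \<and> y \<in> D \<and> x \<otimes> inv y = \<one>} = (\<lambda>x. (x, x)) ` D"
  proof safe
    fix x y assume "x \<in> D" "y \<in> D" "x \<otimes> inv y = \<one>"
    hence "x = y" using subset_carrier by (metis inv_equality inv_inv subsetD inv_closed)
    thus "(x, y) \<in> (\<lambda>x. (x, x)) ` D" using \<open>x \<in> D\<close> by auto
  qed (use subset_carrier in auto)
  moreover have "card ((\<lambda>x. (x, x)) ` D) = card D" by (rule card_image) (auto intro: inj_onI)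
  ultimately show ?thesis unfolding diff_count_def using card_D by simp
qed

lemma char_sum_square:
  assumes lc: "linear_char G \<psi>" and np: "\<not> principal_char G \<psi>"
  shows "char_sum \<psi> D ^ 2 = of_int (int lam - int mu) * char_sum \<psi> D + of_int (int k - int mu)"
proof -
  define R where "R = carrier G - D - {\<one>}"
  define z where "z = char_sum \<psi> D"
  have split: "carrier G - {\<one>} = D \<union> R" and disjoint: "D \<inter> R = {}" and finR: "finite R"
    using subset_carrier one_notin_D finite_carrier unfolding R_def by auto
  have sum_split: "(\<Sum>g\<in>carrier G. f g) = f \<one> + (\<Sum>g\<in>D. f g) + (\<Sum>g\<in>R. f g)"
    for f :: "'a \<Rightarrow> complex"
    using sum.remove[OF finite_carrier one_closed, of f]
      sum.union_disjoint[OF finite_D finR disjoint, of f] split by simp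
  have "0 = (\<Sum>g\<in>carrier G. \<psi> g)"
    using sum_nonprincipal_linear_char[OF finite_carrier lc np] by simp
  also have "\<dots> = 1 + z + (\<Sum>g\<in>R. \<psi> g)"
    unfolding sum_split z_def char_sum_def by (simp add: linear_char_one[OF lc])
  finally have sum_R: "(\<Sum>g\<in>R. \<psi> g) = - 1 - z" by (simp add: algebra_simps eq_neg_iff_add_eq_0)
  have "z ^ 2 = (\<Sum>g\<in>carrier G. of_nat (diff_count G D g) * \<psi> g)"
    using char_sum_times_inv_eq_sum_diff_count[OF finite_carrier lc subset_carrier]
    unfolding z_def char_sum_def power2_eq_square sum_inv_D .
  also have "\<dots> = of_nat k + (\<Sum>g\<in>D. of_nat lam * \<psi> g) + (\<Sum>g\<in>R. of_nat mu * \<psi> g)"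
  proof -
    have "(\<Sum>g\<in>D. of_nat (diff_count G D g) * \<psi> g) = (\<Sum>g\<in>D. of_nat lam * \<psi> g)"
      using diff_count_in_D one_notin_D by (intro sum.cong refl) auto
    moreover have "(\<Sum>g\<in>R. of_nat (diff_count G D g) * \<psi> g) = (\<Sum>g\<in>R. of_nat mu * \<psi> g)"
      using diff_count_notin_D unfolding R_def by (intro sum.cong refl) auto
    ultimately show ?thesis
      unfolding sum_split by (simp add: diff_count_one linear_char_one[OF lc])
  qed
  also have "\<dots> = of_nat k + of_nat lam * z + of_nat mu * (- 1 - z)"
    unfolding sum_distrib_left[symmetric] sum_R z_def char_sum_def by simp
  finally show ?thesis unfolding z_def by (simp add: algebra_simps)
qed

lemma char_sum_power_complement:
  assumes lc: "linear_char G \<psi>" and t: "t \<le> char_order G \<psi>"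
  shows "char_sum (\<lambda>x. \<psi> x ^ (char_order G \<psi> - t)) D = char_sum (\<lambda>x. \<psi> x ^ t) D"
proof -
  have "\<psi> d ^ (char_order G \<psi> - t) = \<psi> (inv d) ^ t" if "d \<in> D" for d
  proof -
    have d: "d \<in> carrier G" using that subset_carrier by blast
    have "\<psi> d ^ (char_order G \<psi> - t) * \<psi> d ^ t = 1"
      using power_char_order[OF finite_carrier lc d] t by (simp flip: power_add)
    moreover have "\<psi> (inv d) ^ t * \<psi> d ^ t = 1"
      using linear_char_inv[OF lc d] by (simp flip: power_mult_distrib)
    ultimately show ?thesis using linear_char_nonzero[OF lc d] by (metis mult_cancel_right power_not_zero)
  qed
  thus ?thesis unfolding char_sum_def using sum_inv_D[of "\<lambda>x. \<psi> x ^ t"] by simp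
qed

end

locale regular_PDS_square_Delta = regular_PDS_group +
  fixes s :: nat
  assumes sqrt_Delta: "int s ^ 2 = PDS_Delta k lam mu"
begin

text \<open>The roots of \<open>x\<^sup>2 = (lam - mu) x + (k - mu)\<close> are \<open>lower_root\<close> and \<open>lower_root + s\<close>.\<close>
definition lower_root :: int where
  "lower_root = (int lam - int mu - int s) div 2"

lemma char_sum_cases:
  assumes "linear_char G \<psi>" and "\<not> principal_char G \<psi>"
  shows "char_sum \<psi> D = of_int lower_root \<or> char_sum \<psi> D = of_int (lower_root + int s)"
  using quadratic_roots_square_discriminant[OF char_sum_square[OF assms], of "int s"] sqrt_Delta
  unfolding lower_root_def PDS_Delta_def by simp

definition upper_exponents :: "('a \<Rightarrow> complex) \<Rightarrow> nat set" where
  "upper_exponents \<psi> =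
    {t \<in> {1..<char_order G \<psi>}. char_sum (\<lambda>x. \<psi> x ^ t) D = of_int (lower_root + int s)}"

lemma upper_exponents_subset: "upper_exponents \<psi> \<subseteq> {1..<char_order G \<psi>}"
  unfolding upper_exponents_def by blast

lemma char_sum_power_eq:
  assumes lc: "linear_char G \<psi>" and t: "t \<in> {1..<char_order G \<psi>}"
  shows "char_sum (\<lambda>x. \<psi> x ^ t) D =
    of_int lower_root + of_nat s * (if t \<in> upper_exponents \<psi> then 1 else 0)"
proof -
  have "\<not> principal_char G (\<lambda>x. \<psi> x ^ t)"
    using t principal_char_power_iff[OF finite_carrier lc] by (auto dest: nat_dvd_not_less)
  from char_sum_cases[OF linear_char_power[OF lc] this] show ?thesis
    using t unfolding upper_exponents_def by auto
qed

lemma upper_exponents_complement: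
  assumes "linear_char G \<psi>" and "t \<in> upper_exponents \<psi>"
  shows "char_order G \<psi> - t \<in> upper_exponents \<psi>"
  using assms char_sum_power_complement[OF assms(1), of t] unfolding upper_exponents_def by auto

text \<open>Inversion over the powers of \<open>\<psi>\<close>: evaluate \<open>sum_char_sum_powers\<close> at \<open>u = \<psi> g\<close>.\<close>
lemma upper_exponents_identity:
  assumes lc: "linear_char G \<psi>" and g: "g \<in> carrier G"
  shows "\<exists>x. of_nat s * (\<Sum>t\<in>upper_exponents \<psi>. \<psi> g ^ t) =
    of_int (int (char_order G \<psi>) * x + lower_root - int k)"
proof -
  let ?n = "char_order G \<psi>" and ?U = "upper_exponents \<psi>" and ?u = "\<psi> g"
  define c where "c = card {d\<in>D. \<psi> d * ?u = 1}"
  have n: "0 < ?n" using char_order_pos[OF finite_carrier lc] .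
  have u: "?u ^ ?n = 1" using power_char_order[OF finite_carrier lc g] .
  have sum_U: "(\<Sum>t\<in>{1..<?n}. if t \<in> ?U then ?u ^ t else 0) = (\<Sum>t\<in>?U. ?u ^ t)"
    using upper_exponents_subset by (simp add: sum.If_cases Int_absorb1 Int_def[symmetric])
  have "1 + (\<Sum>t\<in>{1..<?n}. ?u ^ t) = (if ?u = 1 then of_nat ?n else 0)"
    using sum_powers_root_of_unity[OF u n] n
    by (simp add: lessThan_atLeast0 sum.atLeast_Suc_lessThan)
  hence sum_pos: "(\<Sum>t\<in>{1..<?n}. ?u ^ t) = (if ?u = 1 then of_nat ?n else 0) - 1"
    by (metis add_diff_cancel_left')
  have "of_nat (?n * c) = (\<Sum>t<?n. char_sum (\<lambda>x. \<psi> x ^ t) D * ?u ^ t)"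
    unfolding c_def by (rule sum_char_sum_powers[OF finite_carrier lc subset_carrier u, symmetric])
  also have "\<dots> = of_nat k + (\<Sum>t\<in>{1..<?n}. char_sum (\<lambda>x. \<psi> x ^ t) D * ?u ^ t)"
    using n by (simp add: lessThan_atLeast0 sum.atLeast_Suc_lessThan char_sum_def card_D)
  also have "(\<Sum>t\<in>{1..<?n}. char_sum (\<lambda>x. \<psi> x ^ t) D * ?u ^ t) =
      (\<Sum>t\<in>{1..<?n}. of_int lower_root * ?u ^ t + of_nat s * (if t \<in> ?U then ?u ^ t else 0))"
    by (intro sum.cong refl) (simp add: char_sum_power_eq[OF lc] algebra_simps)
  also have "\<dots> = of_int lower_root * (\<Sum>t\<in>{1..<?n}. ?u ^ t) + of_nat s * (\<Sum>t\<in>?U. ?u ^ t)"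
    by (simp only: sum.distrib sum_distrib_left[symmetric] sum_U)
  finally have "of_nat s * (\<Sum>t\<in>?U. ?u ^ t) =
      of_int (int ?n * (int c - lower_root * (if ?u = 1 then 1 else 0)) + lower_root - int k)"
    unfolding sum_pos by (simp add: algebra_simps)
  thus ?thesis by blast
qed

lemma upper_exponents_power_sum_in_Ints:
  assumes s: "0 < s" and lc: "linear_char G \<psi>" and g: "g \<in> carrier G"
  shows "(\<Sum>t\<in>upper_exponents \<psi>. \<psi> g ^ t) \<in> \<int>"
proof -
  let ?U = "upper_exponents \<psi>"
  have "finite ?U" using upper_exponents_subset finite_subset by blast
  hence "algebraic_int (\<Sum>t\<in>?U. \<psi> g ^ t)"
    using algebraic_int_sum_powers_root_of_unity[OF char_order_pos[OF finite_carrier lc]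
        power_char_order[OF finite_carrier lc g]] by blast
  moreover obtain x where
    "of_nat s * (\<Sum>t\<in>?U. \<psi> g ^ t) = of_int (int (char_order G \<psi>) * x + lower_root - int k)"
    using upper_exponents_identity[OF lc g] by blast
  hence "(\<Sum>t\<in>?U. \<psi> g ^ t) = of_int (int (char_order G \<psi>) * x + lower_root - int k) / of_nat s"
    using s by (simp add: field_simps)
  hence "(\<Sum>t\<in>?U. \<psi> g ^ t) \<in> \<rat>" by simp
  ultimately show ?thesis by (rule rational_algebraic_int_is_int)
qed

lemma upper_exponents_power_sum_cong:
  assumes lc: "linear_char G \<psi>" and coprime: "coprime (char_order G \<psi>) s"
    and g: "g \<in> carrier G" and \<tau>: "(\<Sum>t\<in>upper_exponents \<psi>. \<psi> g ^ t) = of_int \<tau>"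
  shows "int (char_order G \<psi>) dvd \<tau> - int (card (upper_exponents \<psi>))"
proof -
  let ?n = "char_order G \<psi>" and ?\<sigma> = "int (card (upper_exponents \<psi>))"
  obtain x where "of_nat s * of_int \<tau> = (of_int (int ?n * x + lower_root - int k) :: complex)"
    using upper_exponents_identity[OF lc g] \<tau> by auto
  hence "of_int (int s * \<tau>) = (of_int (int ?n * x + lower_root - int k) :: complex)" by simp
  hence x: "int s * \<tau> = int ?n * x + lower_root - int k" by (simp only: of_int_eq_iff)
  obtain x1 where "of_nat s * of_int ?\<sigma> = (of_int (int ?n * x1 + lower_root - int k) :: complex)"
    using upper_exponents_identity[OF lc one_closed] by (auto simp: linear_char_one[OF lc])
  hence "of_int (int s * ?\<sigma>) = (of_int (int ?n * x1 + lower_root - int k) :: complex)" by simp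
  hence x1: "int s * ?\<sigma> = int ?n * x1 + lower_root - int k" by (simp only: of_int_eq_iff)
  have "int s * (\<tau> - ?\<sigma>) = int ?n * (x - x1)"
    using x x1 by (simp add: right_diff_distrib)
  hence "int ?n dvd int s * (\<tau> - ?\<sigma>)" by simp
  thus ?thesis using coprime by (simp add: coprime_dvd_mult_right_iff)
qed

lemma upper_exponents_power_sum_cases:
  assumes s: "0 < s" and lc: "linear_char G \<psi>" and coprime: "coprime (char_order G \<psi>) s"
    and g: "g \<in> carrier G"
  shows "(\<Sum>t\<in>upper_exponents \<psi>. \<psi> g ^ t) \<in>
    {of_nat (card (upper_exponents \<psi>)), of_nat (card (upper_exponents \<psi>)) - of_nat (char_order G \<psi>)}"
proof -
  let ?n = "char_order G \<psi>" and ?U = "upper_exponents \<psi>"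
  define \<sigma> where "\<sigma> = int (card ?U)"
  obtain \<tau> where \<tau>: "(\<Sum>t\<in>?U. \<psi> g ^ t) = of_int \<tau>"
    using upper_exponents_power_sum_in_Ints[OF s lc g] by (elim Ints_cases)
  have "int ?n dvd \<tau> - \<sigma>"
    using upper_exponents_power_sum_cong[OF lc coprime g \<tau>] unfolding \<sigma>_def .
  moreover have "\<bar>\<tau>\<bar> \<le> \<sigma>"
  proof -
    have "norm (of_int \<tau> :: complex) \<le> (\<Sum>t\<in>?U. norm (\<psi> g ^ t))"
      unfolding \<tau>[symmetric] by (rule norm_sum)
    also have "\<dots> = of_int \<sigma>"
      using power_eq_1_iff[OF power_char_order[OF finite_carrier lc g]]
        char_order_pos[OF finite_carrier lc]
      by (simp add: norm_power \<sigma>_def)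
    finally show ?thesis by simp
  qed
  moreover have "\<sigma> < int ?n"
    using card_mono[OF _ upper_exponents_subset, of \<psi>] char_order_pos[OF finite_carrier lc]
    unfolding \<sigma>_def by simp
  ultimately have "\<tau> - \<sigma> = 0 \<or> \<tau> - \<sigma> = - int ?n"
    by (intro multiple_between_neg_double_and_0) auto
  hence "\<tau> = \<sigma> \<or> \<tau> = \<sigma> - int ?n" by auto
  thus ?thesis using \<tau> unfolding \<sigma>_def by auto
qed

text \<open>The first two moments of the power sums over \<open>G\<close> leave only the two extreme
  possibilities for the set of exponents.\<close>
lemma upper_exponents_cases:
  assumes s: "0 < s" and lc: "linear_char G \<psi>" and coprime: "coprime (char_order G \<psi>) s"
  shows "upper_exponents \<psi> = {} \<or> upper_exponents \<psi> = {1..<char_order G \<psi>}"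
proof -
  let ?n = "char_order G \<psi>" and ?U = "upper_exponents \<psi>"
  define \<sigma> where "\<sigma> = card ?U"
  define \<tau> where "\<tau> g = (if (\<Sum>t\<in>?U. \<psi> g ^ t) = of_nat \<sigma> then int \<sigma> else int \<sigma> - int ?n)" for g
  have \<tau>: "(\<Sum>t\<in>?U. \<psi> g ^ t) = of_int (\<tau> g)"
    and \<tau>_cases: "\<tau> g - int \<sigma> = 0 \<or> \<tau> g - int \<sigma> = - int ?n" if "g \<in> carrier G" for g
    using upper_exponents_power_sum_cases[OF s lc coprime that] unfolding \<tau>_def \<sigma>_def by auto
  have "of_int (\<Sum>g\<in>carrier G. \<tau> g) = (\<Sum>g\<in>carrier G. \<Sum>t\<in>?U. \<psi> g ^ t)"
    by (simp add: \<tau>)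
  also have "\<dots> = 0" by (rule sum_char_power_subset_sum[OF finite_carrier lc upper_exponents_subset])
  finally have "(\<Sum>g\<in>carrier G. \<tau> g) = 0" by (simp only: of_int_eq_0_iff)
  moreover have "of_int (\<Sum>g\<in>carrier G. \<tau> g ^ 2) = (\<Sum>g\<in>carrier G. (\<Sum>t\<in>?U. \<psi> g ^ t) ^ 2)"
    by (simp add: \<tau>)
  hence "of_int (\<Sum>g\<in>carrier G. \<tau> g ^ 2) = (of_int (int (card (carrier G)) * int \<sigma>) :: complex)"
    using sum_square_char_power_subset_sum[OF finite_carrier lc upper_exponents_subset
        upper_exponents_complement[OF lc]]
    unfolding \<sigma>_def by simp
  hence "(\<Sum>g\<in>carrier G. \<tau> g ^ 2) = int (card (carrier G)) * int \<sigma>"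
    by (simp only: of_int_eq_iff)
  ultimately have "int \<sigma> = 0 \<or> int \<sigma> = int ?n - 1"
    using sum_two_valued_deviations[of "carrier G" \<tau> "int \<sigma>" "int ?n"] finite_carrier \<tau>_cases
      one_closed by blast
  thus ?thesis
  proof
    assume "int \<sigma> = 0"
    thus ?thesis using upper_exponents_subset[of \<psi>] finite_subset[of ?U]
      unfolding \<sigma>_def by simp
  next
    assume "int \<sigma> = int ?n - 1"
    hence "card ?U = card {1..<?n}" using char_order_pos[OF finite_carrier lc] unfolding \<sigma>_def by simp
    thus ?thesis using card_subset_eq[OF _ upper_exponents_subset] by simp
  qed
qed

lemma char_sum_root_char_order_dvd:
  assumes s: "0 < s" and lc: "linear_char G \<psi>" and np: "\<not> principal_char G \<psi>"
    and coprime: "coprime (char_order G \<psi>) s"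
  shows "\<exists>a\<in>{lower_root, lower_root + int s}.
    char_sum \<psi> D = of_int a \<and> int (char_order G \<psi>) dvd int k - a"
proof -
  let ?n = "char_order G \<psi>" and ?U = "upper_exponents \<psi>"
  have n: "2 \<le> ?n"
    using char_order_pos[OF finite_carrier lc] np
      principal_char_iff_char_order_eq_1[OF finite_carrier lc] by linarith
  hence one: "1 \<in> {1..<?n}" by simp
  obtain x where "of_nat s * of_nat (card ?U) = (of_int (int ?n * x + lower_root - int k) :: complex)"
    using upper_exponents_identity[OF lc one_closed] by (auto simp: linear_char_one[OF lc])
  hence "of_int (int s * int (card ?U)) = (of_int (int ?n * x + lower_root - int k) :: complex)"
    by simp
  hence x: "int s * int (card ?U) = int ?n * x + lower_root - int k" by (simp only: of_int_eq_iff)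
  show ?thesis
  proof (cases "?U = {}")
    case True
    hence "char_sum \<psi> D = of_int lower_root" using char_sum_power_eq[OF lc one] by simp
    moreover have "int k - lower_root = int ?n * x" using x True by simp
    ultimately show ?thesis by (intro bexI[of _ lower_root]) auto
  next
    case False
    hence U: "?U = {1..<?n}" using upper_exponents_cases[OF s lc coprime] by blast
    hence "char_sum \<psi> D = of_int (lower_root + int s)" using char_sum_power_eq[OF lc one] one by simp
    moreover have "int k - (lower_root + int s) = int ?n * (x - int s)"
      using x U n by (simp add: algebra_simps of_nat_diff)
    ultimately show ?thesis by (intro bexI[of _ "lower_root + int s"]) auto
  qed
qed

lemma eq_1_if_dvd_distinct_roots:
  assumes "a1 \<in> {lower_root, lower_root + int s}" and "a2 \<in> {lower_root, lower_root + int s}"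
    and "a1 \<noteq> a2" and "int n dvd int k - a1" and "int n dvd int k - a2" and "coprime n s"
  shows "n = 1"
proof -
  have "\<bar>a1 - a2\<bar> = int s" using assms(1-3) by auto
  moreover have "int n dvd \<bar>a1 - a2\<bar>" using dvd_diff[OF assms(5,4)] by simp
  ultimately have "n dvd s" by simp
  thus "n = 1" by (rule coprime_common_divisor_nat[OF assms(6) dvd_refl])
qed

lemma char_sum_eq_root_iff_char_order_dvd:
  assumes s: "0 < s" and lc: "linear_char G \<psi>" and np: "\<not> principal_char G \<psi>"
    and coprime: "coprime (char_order G \<psi>) s" and a: "a \<in> {lower_root, lower_root + int s}"
  shows "char_sum \<psi> D = of_int a \<longleftrightarrow> int (char_order G \<psi>) dvd int k - a"
proof -
  obtain a' where a': "a' \<in> {lower_root, lower_root + int s}" "char_sum \<psi> D = of_int a'"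
    "int (char_order G \<psi>) dvd int k - a'"
    using char_sum_root_char_order_dvd[OF s lc np coprime] by blast
  have "char_order G \<psi> \<noteq> 1" using principal_char_iff_char_order_eq_1[OF finite_carrier lc] np by simp
  hence "int (char_order G \<psi>) dvd int k - a \<Longrightarrow> a = a'"
    using eq_1_if_dvd_distinct_roots[OF a a'(1) _ _ a'(3) coprime] by blast
  thus ?thesis using a' by auto
qed

theorem char_sum_eq_if_char_orders_coprime:
  assumes lx: "linear_char G \<xi>" and nx: "\<not> principal_char G \<xi>"
    and lc: "linear_char G \<chi>" and nc: "\<not> principal_char G \<chi>"
    and cx: "coprime (char_order G \<xi>) s" and cc: "coprime (char_order G \<chi>) s"
  shows "char_sum \<xi> D = char_sum \<chi> D"
proof (rule ccontr)
  let ?R = "{lower_root, lower_root + int s}"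
  let ?n1 = "char_order G \<xi>" and ?n2 = "char_order G \<chi>"
  assume ne: "char_sum \<xi> D \<noteq> char_sum \<chi> D"
  obtain a1 a2 where a1: "a1 \<in> ?R" "char_sum \<xi> D = of_int a1"
    and a2: "a2 \<in> ?R" "char_sum \<chi> D = of_int a2"
    using char_sum_cases[OF lx nx] char_sum_cases[OF lc nc] by blast
  have "a1 \<noteq> a2" using a1 a2 ne by auto
  hence s: "0 < s" using a1(1) a2(1) by auto
  note root_iff = char_sum_eq_root_iff_char_order_dvd[OF s]
  have d1: "int ?n1 dvd int k - a1" using root_iff[OF lx nx cx a1(1)] a1(2) by simp
  have d2: "int ?n2 dvd int k - a2" using root_iff[OF lc nc cc a2(1)] a2(2) by simp
  have "coprime ?n1 ?n2"
  proof (rule coprimeI)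
    fix c assume c1: "c dvd ?n1" and c2: "c dvd ?n2"
    have "int c dvd int k - a1" using dvd_trans[OF int_dvd_int_iff[THEN iffD2, OF c1] d1] .
    moreover have "int c dvd int k - a2" using dvd_trans[OF int_dvd_int_iff[THEN iffD2, OF c2] d2] .
    moreover have "coprime c s" using coprime_divisors[OF c1 dvd_refl cx] .
    ultimately have "c = 1" using eq_1_if_dvd_distinct_roots[OF a1(1) a2(1) \<open>a1 \<noteq> a2\<close>] by blast
    thus "is_unit c" by simp
  qed
  define \<psi> where "\<psi> = (\<lambda>x. \<xi> x * \<chi> x)"
  have lp: "linear_char G \<psi>" unfolding \<psi>_def using lx lc by (rule linear_char_times)
  have order: "char_order G \<psi> = ?n1 * ?n2"
    unfolding \<psi>_def using finite_carrier lx lc \<open>coprime ?n1 ?n2\<close> by (rule char_order_times_coprime)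
  have "?n1 \<noteq> 1" using principal_char_iff_char_order_eq_1[OF finite_carrier lx] nx by simp
  hence np: "\<not> principal_char G \<psi>"
    using order principal_char_iff_char_order_eq_1[OF finite_carrier lp] by simp
  have cp: "coprime (char_order G \<psi>) s" using cx cc order by simp
  obtain a3 where a3: "a3 \<in> ?R" "char_sum \<psi> D = of_int a3"
    using char_sum_cases[OF lp np] by blast
  have "int (?n1 * ?n2) dvd int k - a3" using root_iff[OF lp np cp a3(1)] a3(2) order by simp
  hence "int ?n1 dvd int k - a3" and "int ?n2 dvd int k - a3"
    by (auto intro: dvd_trans[rotated] simp del: of_nat_mult)
  hence "char_sum \<xi> D = of_int a3" and "char_sum \<chi> D = of_int a3"
    using root_iff[OF lx nx cx a3(1)] root_iff[OF lc nc cc a3(1)] by simp_all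
  with ne show False by simp
qed

end

theorem mainTheorem7:
  fixes G :: "('a, 'b) monoid_scheme" and D :: "'a set"
    and v k lam mu s :: nat and \<xi> \<chi> :: "'a \<Rightarrow> complex"
  assumes "group G" and "finite (carrier G)"
    and "is_PDS G D v k lam mu" and "regular_PDS G D"
    and "0 < mu" and "mu < k"
    and "int s ^ 2 = PDS_Delta k lam mu"
    and "linear_char G \<xi>" and "\<not> principal_char G \<xi>"
    and "linear_char G \<chi>" and "\<not> principal_char G \<chi>"
    and "coprime (char_order G \<xi>) s" and "coprime (char_order G \<chi>) s"
  shows "char_sum \<xi> D = char_sum \<chi> D"
proof -
  interpret regular_PDS_square_Delta G D v k lam mu s
    using assms(1-4,7)
    by (simp add: regular_PDS_square_Delta_def regular_PDS_square_Delta_axioms_def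
        regular_PDS_group_def regular_PDS_group_axioms_def)
  show ?thesis using char_sum_eq_if_char_orders_coprime assms(8-13) by blast
qed

end
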